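(* If $\rho$ is an invariant state supported on $\Omega=\{|-\rangle,|+\rangle,\varphi_{0_1},\varphi_{0_N}\}^\perp$, then $\rho Z_k=e^{\beta_k}Z_k\rho$ for all $k=1,\dots,N-1$.
   Context: Fix integers $N\ge 2$ and $n_1\ge n_2\ge\dots\ge n_N\ge 1$. Let $\mathcal H$ be a finite-dimensional complex Hilbert space with orthonormal basis $\{|-\rangle,|+\rangle\}\cup\{|a_k\rangle:1\le k\le N,\ 0\le a\le n_k-1\}$. For vectors $x,y$, $|x\rangle\langle y|$ denotes the operator $u\mapsto\langle y,u\rangle x$. Put $E_k=\mathrm{span}\{|a_k\rangle:0\le a\le n_k-1\}$, $P_k$ the orthogonal projection onto $E_k$, $P_\pm=|\pm\rangle\langle\pm|$, $\zeta_k=e^{2\pi i/n_k}$, and $\varphi_{a_k}=n_k^{-1/2}\sum_{b=0}^{n_k-1}\zeta_k^{-ba}|b_k\rangle$ for $0\le a\le n_k-1$. For $1\le k\le N-1$ let $Z_k=n_k^{-1/2}\sum_{b=0}^{n_{k+1}-1}\sum_{a=0}^{n_k-1}\zeta_k^{ba}|b_{k+1}\rangle\langle a_k|$ (an operator on $\mathcal H$), $|Z|_k=Z_k^*Z_k$. Let $\omega$ range over the set $\{\omega_+,\omega_-,\omega_1,\dots,\omega_{N-1}\}$ of (distinct) Bohr frequencies, and let $\Gamma_{\pm,\omega}>0$, $\gamma_{\pm,\omega}\in\mathbb R$ be constants. Kraus operators: $L_{-,\omega_+}=\sqrt{n_1\Gamma_{-,\omega_+}}|\varphi_{0_1}\rangle\langle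 +|$, $L_{+,\omega_+}=\sqrt{n_1\Gamma_{+,\omega_+}}|+\rangle\langle\varphi_{0_1}|$, $L_{-,\omega_k}=\sqrt{\Gamma_{-,\omega_k}}Z_k$, $L_{+,\omega_k}=\sqrt{\Gamma_{+,\omega_k}}Z_k^*$ ($1\le k\le N-1$), $L_{-,\omega_-}=\sqrt{\Gamma_{-,\omega_-}}|-\rangle\langle\varphi_{0_N}|$, $L_{+,\omega_-}=0$. Effective Hamiltonian $H_{\mathrm{eff}}=n_1\gamma_{-,\omega_+}P_+-n_1\gamma_{+,\omega_+}|\varphi_{0_1}\rangle\langle\varphi_{0_1}|+\gamma_{-,\omega_-}|\varphi_{0_N}\rangle\langle\varphi_{0_N}|-\gamma_{+,\omega_-}P_-+\sum_{k=1}^{N-1}(\gamma_{-,\omega_k}|Z|_k-\gamma_{+,\omega_k}P_{k+1})$. The generator is $\mathcal L(\rho)=-i[H_{\mathrm{eff}},\rho]+\sum_{\omega}\sum_{\epsilon=\pm}\big(L_{\epsilon,\omega}\rho L_{\epsilon,\omega}^*-\tfrac12\{L_{\epsilon,\omega}^*L_{\epsilon,\omega},\rho\}\big)$. A state is a positive operator of trace one; it is invariant if $\mathcal L(\rho)=0$; an operator is supported on a subspace $E$ if its range is contained in $E$. Define $\beta_k$ by $e^{\beta_k}=\Gamma_{-,\omega_k}/\Gamma_{+,\omega_k}$ for $1\le k\le N-1$. *)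

theory Defs
  imports Complex_Main "HOL-Library.Function_Algebras"
begin

text \<open>Orthonormal basis labels: Minus = |->, Plus = |+>, Site k a = |a_k>
  (k in 1..N, a in 0..n_k - 1).  Vectors are functions on labels, operators
  are matrices (functions of two labels); only labels in the basis set matter.\<close>

datatype idx = Minus | Plus | Site nat nat

datatype freq = Wplus | Wminus | W nat

type_synonym vec = "idx \<Rightarrow> complex"
type_synonym op = "idx \<Rightarrow> idx \<Rightarrow> complex"

definition basis :: "nat \<Rightarrow> (nat \<Rightarrow> nat) \<Rightarrow> idx set" where
  "basis N n = {Minus, Plus} \<union> {Site k a | k a. 1 \<le> k \<and> k \<le> N \<and> a < n k}"

definition is_op :: "nat \<Rightarrow> (nat \<Rightarrow> nat) \<Rightarrow> op \<Rightarrow> bool" where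
  "is_op N n A \<longleftrightarrow> (\<forall>i j. (i \<notin> basis N n \<or> j \<notin> basis N n) \<longrightarrow> A i j = 0)"

definition ket :: "idx \<Rightarrow> vec" where
  "ket i = (\<lambda>j. if j = i then 1 else 0)"

definition inner_H :: "nat \<Rightarrow> (nat \<Rightarrow> nat) \<Rightarrow> vec \<Rightarrow> vec \<Rightarrow> complex" where
  "inner_H N n x y = (\<Sum>i\<in>basis N n. cnj (x i) * y i)"

definition ketbra :: "vec \<Rightarrow> vec \<Rightarrow> op" where
  "ketbra x y = (\<lambda>i j. x i * cnj (y j))"

definition mmult :: "nat \<Rightarrow> (nat \<Rightarrow> nat) \<Rightarrow> op \<Rightarrow> op \<Rightarrow> op" where
  "mmult N n A C = (\<lambda>i j. \<Sum>l\<in>basis N n. A i l * C l j)"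

definition app :: "nat \<Rightarrow> (nat \<Rightarrow> nat) \<Rightarrow> op \<Rightarrow> vec \<Rightarrow> vec" where
  "app N n A x = (\<lambda>i. \<Sum>j\<in>basis N n. A i j * x j)"

definition adj :: "op \<Rightarrow> op" where
  "adj A = (\<lambda>i j. cnj (A j i))"

definition smult :: "complex \<Rightarrow> op \<Rightarrow> op" where
  "smult c A = (\<lambda>i j. c * A i j)"

definition trace_H :: "nat \<Rightarrow> (nat \<Rightarrow> nat) \<Rightarrow> op \<Rightarrow> complex" where
  "trace_H N n A = (\<Sum>i\<in>basis N n. A i i)"

definition is_state :: "nat \<Rightarrow> (nat \<Rightarrow> nat) \<Rightarrow> op \<Rightarrow> bool" where
  "is_state N n A \<longleftrightarrow> is_op N n A
     \<and> (\<forall>x. Im (inner_H N n x (app N n A x)) = 0 \<and> Re (inner_H N n x (app N n A x)) \<ge> 0)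
     \<and> trace_H N n A = 1"

definition zeta :: "(nat \<Rightarrow> nat) \<Rightarrow> nat \<Rightarrow> complex" where
  "zeta n k = cis (2 * pi / real (n k))"

definition phi :: "(nat \<Rightarrow> nat) \<Rightarrow> nat \<Rightarrow> nat \<Rightarrow> vec" where
  "phi n k a = (\<lambda>i. \<Sum>b<n k. (1 / complex_of_real (sqrt (real (n k))))
                          * inverse (zeta n k) ^ (b * a) * ket (Site k b) i)"

definition Zop :: "(nat \<Rightarrow> nat) \<Rightarrow> nat \<Rightarrow> op" where
  "Zop n k = (\<lambda>i j. \<Sum>b<n (Suc k). \<Sum>a<n k.
       (1 / complex_of_real (sqrt (real (n k)))) * zeta n k ^ (b * a)
       * ketbra (ket (Site (Suc k) b)) (ket (Site k a)) i j)"

definition Proj :: "(nat \<Rightarrow> nat) \<Rightarrow> nat \<Rightarrow> op" where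
  "Proj n k = (\<lambda>i j. \<Sum>a<n k. ketbra (ket (Site k a)) (ket (Site k a)) i j)"

definition dissip :: "nat \<Rightarrow> (nat \<Rightarrow> nat) \<Rightarrow> op \<Rightarrow> op \<Rightarrow> op" where
  "dissip N n L \<rho> = mmult N n (mmult N n L \<rho>) (adj L)
     - smult (1/2) (mmult N n (mmult N n (adj L) L) \<rho> + mmult N n \<rho> (mmult N n (adj L) L))"

definition Lm :: "(nat \<Rightarrow> nat) \<Rightarrow> nat \<Rightarrow> (freq \<Rightarrow> real) \<Rightarrow> freq \<Rightarrow> op" where
  "Lm n N Gm w = (case w of
      Wplus \<Rightarrow> smult (complex_of_real (sqrt (real (n 1) * Gm Wplus))) (ketbra (phi n 1 0) (ket Plus))
    | W k \<Rightarrow> smult (complex_of_real (sqrt (Gm (W k)))) (Zop n k)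
    | Wminus \<Rightarrow> smult (complex_of_real (sqrt (Gm Wminus))) (ketbra (ket Minus) (phi n N 0)))"

definition Lp :: "(nat \<Rightarrow> nat) \<Rightarrow> nat \<Rightarrow> (freq \<Rightarrow> real) \<Rightarrow> freq \<Rightarrow> op" where
  "Lp n N Gp w = (case w of
      Wplus \<Rightarrow> smult (complex_of_real (sqrt (real (n 1) * Gp Wplus))) (ketbra (ket Plus) (phi n 1 0))
    | W k \<Rightarrow> smult (complex_of_real (sqrt (Gp (W k)))) (adj (Zop n k))
    | Wminus \<Rightarrow> (\<lambda>i j. 0))"

definition Heff :: "nat \<Rightarrow> (nat \<Rightarrow> nat) \<Rightarrow> (freq \<Rightarrow> real) \<Rightarrow> (freq \<Rightarrow> real) \<Rightarrow> op" where
  "Heff N n gm gp =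
      smult (of_real (real (n 1) * gm Wplus)) (ketbra (ket Plus) (ket Plus))
    - smult (of_real (real (n 1) * gp Wplus)) (ketbra (phi n 1 0) (phi n 1 0))
    + smult (of_real (gm Wminus)) (ketbra (phi n N 0) (phi n N 0))
    - smult (of_real (gp Wminus)) (ketbra (ket Minus) (ket Minus))
    + (\<Sum>k\<in>{1..N-1}. smult (of_real (gm (W k))) (mmult N n (adj (Zop n k)) (Zop n k))
                     - smult (of_real (gp (W k))) (Proj n (Suc k)))"

definition freqs :: "nat \<Rightarrow> freq set" where
  "freqs N = {Wplus, Wminus} \<union> W ` {1..N-1}"

definition lindblad :: "nat \<Rightarrow> (nat \<Rightarrow> nat) \<Rightarrow> (freq \<Rightarrow> real) \<Rightarrow> (freq \<Rightarrow> real)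
     \<Rightarrow> (freq \<Rightarrow> real) \<Rightarrow> (freq \<Rightarrow> real) \<Rightarrow> op \<Rightarrow> op" where
  "lindblad N n Gm Gp gm gp \<rho> =
      smult (- \<i>) (mmult N n (Heff N n gm gp) \<rho> - mmult N n \<rho> (Heff N n gm gp))
    + (\<Sum>w\<in>freqs N. dissip N n (Lm n N Gm w) \<rho> + dissip N n (Lp n N Gp w) \<rho>)"

definition supported_Omega :: "nat \<Rightarrow> (nat \<Rightarrow> nat) \<Rightarrow> op \<Rightarrow> bool" where
  "supported_Omega N n A \<longleftrightarrow>
     (\<forall>x. \<forall>v\<in>{ket Minus, ket Plus, phi n 1 0, phi n N 0}. inner_H N n v (app N n A x) = 0)"

definition beta :: "(freq \<Rightarrow> real) \<Rightarrow> (freq \<Rightarrow> real) \<Rightarrow> nat \<Rightarrow> real" where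
  "beta Gm Gp k = ln (Gm (W k) / Gp (W k))"

end

theory Submission
  imports Defs
begin

text \<open>Since \<rho> is positive and supported on Omega^\<bottom>, it is annihilated from both sides by
  |\<plusminus>>, \<phi>_{0_1} and \<phi>_{0_N}; hence all terms of the generator involving these vectors
  drop out, and as n_{k+1} \<le> n_k gives Z_k Z_k^* = P_{k+1}, invariance reads
  J(\<rho>) = G \<rho> + \<rho> G^*, where J(\<rho>) collects the jumps
  \<Gamma>_{-,k} Z_k \<rho> Z_k^* + \<Gamma>_{+,k} Z_k^* \<rho> Z_k and G is a combination of the
  projections Q_k = Z_k^* Z_k and P_{k+1} with coefficients of positive real part.
  Compressing to blocks \<rho>_{jl} = P_j \<rho> P_l, J has no off-diagonal blocks, and on E_j the
  operator G acts by scalars of positive real part on the ranges of Q_j and P_j - Q_j, so the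
  Sylvester equation G \<rho>_{jl} + \<rho>_{jl} G^* = 0 forces \<rho>_{jl} = 0 for j \<noteq> l.
  On the diagonal, induction along the chain gives the detailed balance relation
  \<Gamma>_{+,k} \<rho>_{k+1,k+1} = \<Gamma>_{-,k} Z_k \<rho>_{kk} Z_k^* together with
  Z_k \<rho>_{kk} Q_k = Z_k \<rho>_{kk}; multiplying by Z_k on the right yields
  \<Gamma>_{+,k} \<rho> Z_k = \<Gamma>_{-,k} Z_k \<rho>.\<close>

lemma sum_fun_apply: "(sum f S) i = (\<Sum>k\<in>S. f k i)"
  by (induction S rule: infinite_finite_induct) auto

lemma op_zero_eq: "(\<lambda>i j. 0) = (0 :: op)"
  by (simp add: zero_fun_def)

lemma adj_adj [simp]: "adj (adj A) = A"
  unfolding adj_def by simp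

lemma adj_smult: "adj (smult c A) = smult (cnj c) (adj A)"
  unfolding adj_def smult_def by simp

lemma adj_ketbra: "adj (ketbra x y) = ketbra y x"
  unfolding adj_def ketbra_def by (simp add: fun_eq_iff mult.commute)

lemma smult_smult: "smult a (smult b A) = smult (a * b) A"
  unfolding smult_def by (simp add: mult.assoc)

lemma smult_zero [simp]: "smult c 0 = 0"
  unfolding smult_def by (simp add: zero_fun_def)

lemma smult_zero_left [simp]: "smult 0 A = 0"
  unfolding smult_def by (simp add: zero_fun_def)

lemma smult_add_left: "smult (a + b) A = smult a A + smult b A"
  unfolding smult_def by (simp add: fun_eq_iff algebra_simps)

lemma smult_diff: "smult c (A - B) = smult c A - smult c B"
  unfolding smult_def by (simp add: fun_eq_iff algebra_simps)

lemma smult_eq_zero_iff: "smult c A = 0 \<longleftrightarrow> c = 0 \<or> A = 0"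
  unfolding smult_def by (auto simp: fun_eq_iff)

fun site_pos :: "idx \<Rightarrow> nat" where
  "site_pos (Site k a) = a" | "site_pos Minus = 0" | "site_pos Plus = 0"

locale chain_space =
  fixes N :: nat and n :: "nat \<Rightarrow> nat"
begin

abbreviation mprod :: "op \<Rightarrow> op \<Rightarrow> op" (infixl "\<star>" 70) where
  "A \<star> B \<equiv> mmult N n A B"

abbreviation Z :: "nat \<Rightarrow> op" where
  "Z k \<equiv> Zop n k"

abbreviation P :: "nat \<Rightarrow> op" where
  "P k \<equiv> Proj n k"

abbreviation Q :: "nat \<Rightarrow> op" where
  "Q k \<equiv> adj (Z k) \<star> Z k"

lemma finite_basis [simp]: "finite (basis N n)"
proof -
  have "basis N n \<subseteq> {Minus, Plus} \<union> case_prod Site ` (SIGMA k:{..N}. {..<n k})"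
    unfolding basis_def by auto
  then show ?thesis
    by (rule finite_subset) auto
qed

lemma mprod_assoc: "A \<star> B \<star> C = A \<star> (B \<star> C)"
  unfolding mmult_def
  by (auto simp: fun_eq_iff sum_distrib_left sum_distrib_right mult.assoc intro: sum.swap)

lemma mprod_add_left: "(A + B) \<star> C = A \<star> C + B \<star> C"
  unfolding mmult_def by (simp add: fun_eq_iff distrib_right sum.distrib)

lemma mprod_add_right: "C \<star> (A + B) = C \<star> A + C \<star> B"
  unfolding mmult_def by (simp add: fun_eq_iff distrib_left sum.distrib)

lemma mprod_diff_left: "(A - B) \<star> C = A \<star> C - B \<star> C"
  unfolding mmult_def by (simp add: fun_eq_iff left_diff_distrib sum_subtractf)

lemma mprod_diff_right: "C \<star> (A - B) = C \<star> A - C \<star> B"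
  unfolding mmult_def by (simp add: fun_eq_iff right_diff_distrib sum_subtractf)

lemma mprod_smult_left: "smult c A \<star> C = smult c (A \<star> C)"
  unfolding mmult_def smult_def by (simp add: fun_eq_iff sum_distrib_left mult.assoc)

lemma mprod_smult_right: "C \<star> smult c A = smult c (C \<star> A)"
  unfolding mmult_def smult_def by (simp add: fun_eq_iff sum_distrib_left mult.left_commute)

lemma mprod_zero_left [simp]: "0 \<star> C = 0"
  and mprod_zero_right [simp]: "C \<star> 0 = 0"
  unfolding mmult_def by (simp_all add: fun_eq_iff)

lemma mprod_sum_left: "sum f S \<star> C = (\<Sum>k\<in>S. f k \<star> C)"
  unfolding mmult_def by (auto simp: fun_eq_iff sum_fun_apply sum_distrib_right intro: sum.swap)

lemma mprod_sum_right: "C \<star> sum f S = (\<Sum>k\<in>S. C \<star> f k)"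
  unfolding mmult_def by (auto simp: fun_eq_iff sum_fun_apply sum_distrib_left intro: sum.swap)

lemmas mprod_distribs = mprod_add_left mprod_add_right mprod_diff_left mprod_diff_right
  mprod_smult_left mprod_smult_right

lemma sylvester_eq_0:
  assumes "G \<star> Y + Y \<star> G' = 0" and "U \<star> G = smult a U" and "G' \<star> V = smult b V"
    and "a + b \<noteq> 0"
  shows "U \<star> Y \<star> V = 0"
proof -
  have "0 = U \<star> (G \<star> Y + Y \<star> G') \<star> V"
    by (simp add: assms(1))
  also have "\<dots> = U \<star> G \<star> Y \<star> V + U \<star> Y \<star> (G' \<star> V)"
    by (simp add: mprod_add_left mprod_add_right mprod_assoc)
  also have "\<dots> = smult (a + b) (U \<star> Y \<star> V)"
    unfolding assms(2,3) by (simp add: mprod_smult_left mprod_smult_right smult_add_left)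
  finally show ?thesis
    using assms(4) by (simp add: smult_eq_zero_iff)
qed

lemma dissip_smult: "dissip N n (smult c L) A = smult (c * cnj c) (dissip N n L A)"
  unfolding dissip_def adj_smult mprod_smult_left mprod_smult_right smult_smult
  by (simp add: smult_def fun_eq_iff algebra_simps)

lemma dissip_zero: "dissip N n (\<lambda>i j. 0) A = 0"
  by (simp add: dissip_def adj_def smult_def op_zero_eq)

lemma dissip_eq_0:
  assumes "L \<star> A = 0" "A \<star> adj L = 0"
  shows "dissip N n L A = 0"
proof -
  have "adj L \<star> L \<star> A = 0"
    by (simp add: mprod_assoc assms)
  moreover have "A \<star> (adj L \<star> L) = 0"
    by (simp add: assms flip: mprod_assoc)
  ultimately show ?thesis
    unfolding dissip_def assms by (simp add: smult_def fun_eq_iff)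
qed

section \<open>Positive operators supported on the complement of Omega\<close>

lemma sum_basis_ket_left:
  assumes "q \<in> basis N n"
  shows "(\<Sum>p\<in>basis N n. cnj (ket q p) * f p) = f q"
proof -
  have "(\<Sum>p\<in>basis N n. cnj (ket q p) * f p) = (\<Sum>p\<in>basis N n. if p = q then f q else 0)"
    by (rule sum.cong) (auto simp: ket_def)
  with assms show ?thesis by simp
qed

lemma sum_basis_ket_right:
  assumes "q \<in> basis N n"
  shows "(\<Sum>p\<in>basis N n. f p * ket q p) = f q"
proof -
  have "(\<Sum>p\<in>basis N n. f p * ket q p) = (\<Sum>p\<in>basis N n. if p = q then f q else 0)"
    by (rule sum.cong) (auto simp: ket_def)
  with assms show ?thesis by simp
qed

lemma app_ket:
  assumes "is_op N n A"
  shows "app N n A (ket j) i = A i j"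
proof (cases "j \<in> basis N n")
  case True
  then show ?thesis unfolding app_def by (rule sum_basis_ket_right)
next
  case False
  then show ?thesis
    using assms unfolding app_def is_op_def ket_def by (auto intro!: sum.neutral)
qed

lemma inner_app_ket:
  "is_op N n A \<Longrightarrow> i \<in> basis N n \<Longrightarrow> inner_H N n (ket i) (app N n A (ket i)) = A i i"
  unfolding inner_H_def by (simp add: app_ket sum_basis_ket_left)

lemma inner_app_two_point:
  fixes u v :: complex
  assumes "i \<in> basis N n" "j \<in> basis N n" "i \<noteq> j"
  defines "x \<equiv> \<lambda>p. if p = i then u else if p = j then v else 0"
  shows "inner_H N n x (app N n A x)
       = cnj u * (A i i * u + A i j * v) + cnj v * (A j i * u + A j j * v)"
proof -
  have sum_two: "sum f (basis N n) = f i + f j" if "\<And>p. p \<noteq> i \<Longrightarrow> p \<noteq> j \<Longrightarrow> f p = 0" for f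
  proof -
    have "sum f (basis N n) = sum f {i, j}"
      by (rule sum.mono_neutral_right) (use assms that in auto)
    then show ?thesis using assms by simp
  qed
  have "app N n A x r = A r i * u + A r j * v" for r
    unfolding app_def by (subst sum_two) (use assms in auto)
  then show ?thesis
    unfolding inner_H_def by (subst sum_two) (use assms in auto)
qed

lemma state_hermitian:
  assumes "is_state N n A"
  shows "A j i = cnj (A i j)"
proof -
  have op: "is_op N n A" and real: "\<And>x. Im (inner_H N n x (app N n A x)) = 0"
    using assms unfolding is_state_def by auto
  consider "i \<notin> basis N n \<or> j \<notin> basis N n" | "i \<in> basis N n" "i = j"
    | "i \<in> basis N n" "j \<in> basis N n" "i \<noteq> j"
    by blast
  then show ?thesis
  proof cases
    case 1
    then show ?thesis using op unfolding is_op_def by auto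
  next
    case 2
    then show ?thesis using real[of "ket i"] by (simp add: inner_app_ket[OF op] complex_eq_iff)
  next
    case 3
    have diag: "Im (A i i) = 0" "Im (A j j) = 0"
      using real[of "ket i"] real[of "ket j"] 3 by (simp_all add: inner_app_ket[OF op])
    have "Im (A i j) + Im (A j i) = 0"
      using real[of "\<lambda>p. if p = i then 1 else if p = j then 1 else 0"] diag
      by (simp add: inner_app_two_point[OF 3])
    moreover have "Re (A i j) - Re (A j i) = 0"
      using real[of "\<lambda>p. if p = i then 1 else if p = j then \<i> else 0"] diag
      by (simp add: inner_app_two_point[OF 3])
    ultimately show ?thesis by (simp add: complex_eq_iff)
  qed
qed

definition Omega :: "vec set" where
  "Omega = {ket Minus, ket Plus, phi n 1 0, phi n N 0}"

lemma supported_Omega_row: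
  assumes "is_op N n A" "supported_Omega N n A" "v \<in> Omega"
  shows "(\<Sum>p\<in>basis N n. cnj (v p) * A p j) = 0"
proof -
  have "inner_H N n v (app N n A (ket j)) = 0"
    using assms(2,3) unfolding supported_Omega_def Omega_def by blast
  then show ?thesis unfolding inner_H_def app_ket[OF assms(1)] .
qed

lemma supported_Omega_column:
  assumes "is_state N n A" "supported_Omega N n A" "v \<in> Omega"
  shows "(\<Sum>p\<in>basis N n. A i p * v p) = 0"
proof -
  have "(\<Sum>p\<in>basis N n. A i p * v p) = cnj (\<Sum>p\<in>basis N n. cnj (v p) * A p i)"
    by (simp add: state_hermitian[OF assms(1), of i] mult.commute)
  also have "\<dots> = 0"
    using assms supported_Omega_row[of A v i] unfolding is_state_def by simp
  finally show ?thesis .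
qed

lemma ketbra_mprod_eq_0:
  assumes "is_state N n A" "supported_Omega N n A" "v \<in> Omega"
  shows "ketbra x v \<star> A = 0"
proof -
  have "(ketbra x v \<star> A) i j = x i * (\<Sum>p\<in>basis N n. cnj (v p) * A p j)" for i j
    unfolding mmult_def ketbra_def by (simp add: sum_distrib_left mult.assoc)
  then show ?thesis
    using assms supported_Omega_row[of A v] unfolding is_state_def by (simp add: fun_eq_iff)
qed

lemma mprod_ketbra_eq_0:
  assumes "is_state N n A" "supported_Omega N n A" "v \<in> Omega"
  shows "A \<star> ketbra v x = 0"
proof -
  have "(A \<star> ketbra v x) i j = (\<Sum>p\<in>basis N n. A i p * v p) * cnj (x j)" for i j
    unfolding mmult_def ketbra_def by (simp add: sum_distrib_right mult.assoc)
  then show ?thesis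
    using supported_Omega_column[OF assms] by (simp add: fun_eq_iff)
qed

lemma dissip_ketbra_eq_0:
  assumes "is_state N n A" "supported_Omega N n A" "v \<in> Omega"
  shows "dissip N n (smult c (ketbra x v)) A = 0"
  unfolding dissip_smult
  by (simp add: dissip_eq_0 ketbra_mprod_eq_0[OF assms] mprod_ketbra_eq_0[OF assms] adj_ketbra)

section \<open>The subspaces E_k and the operators Z_k\<close>

definition in_E :: "nat \<Rightarrow> idx \<Rightarrow> bool" where
  "in_E k i \<longleftrightarrow> (\<exists>a<n k. i = Site k a)"

lemma in_E_simps [simp]:
  "in_E k (Site k' a) \<longleftrightarrow> k' = k \<and> a < n k"
  "\<not> in_E k Minus" "\<not> in_E k Plus"
  unfolding in_E_def by auto

lemma in_E_basis: "1 \<le> k \<Longrightarrow> k \<le> N \<Longrightarrow> in_E k i \<Longrightarrow> i \<in> basis N n"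
  unfolding in_E_def basis_def by auto

lemma in_E_unique: "in_E k i \<Longrightarrow> in_E k' i \<Longrightarrow> k = k'"
  unfolding in_E_def by auto

lemma sum_basis_E:
  assumes "1 \<le> k" "k \<le> N" "\<And>l. l \<in> basis N n \<Longrightarrow> \<not> in_E k l \<Longrightarrow> f l = 0"
  shows "sum f (basis N n) = (\<Sum>a<n k. f (Site k a))"
proof -
  have "Site k ` {..<n k} \<subseteq> basis N n"
    using assms(1,2) unfolding basis_def by auto
  then have "sum f (basis N n) = sum f (Site k ` {..<n k})"
    by (intro sum.mono_neutral_right finite_basis) (use assms(3) in \<open>auto simp: in_E_def\<close>)
  also have "\<dots> = (\<Sum>a<n k. f (Site k a))"
    by (subst sum.reindex) (auto simp: inj_on_def)
  finally show ?thesis .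
qed

lemma P_entry: "P k i j = (if i = j \<and> in_E k i then 1 else 0)"
proof (cases "in_E k i")
  case True
  then obtain a0 where a0: "a0 < n k" "i = Site k a0"
    unfolding in_E_def by auto
  have "P k i j = (\<Sum>a<n k. if a = a0 then (if j = i then 1 else 0) else 0)"
    unfolding Proj_def ketbra_def ket_def using a0 by (intro sum.cong) auto
  then show ?thesis using True a0 by auto
next
  case False
  then show ?thesis
    unfolding Proj_def ketbra_def ket_def in_E_def by (auto intro!: sum.neutral)
qed

lemma Z_entry: "Z k i j = (if in_E (Suc k) i \<and> in_E k j
    then 1 / complex_of_real (sqrt (real (n k))) * zeta n k ^ (site_pos i * site_pos j) else 0)"
proof (cases "in_E (Suc k) i \<and> in_E k j")
  case True
  then obtain b0 a0 where ab: "b0 < n (Suc k)" "i = Site (Suc k) b0" "a0 < n k" "j = Site k a0"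
    unfolding in_E_def by auto
  define c where "c = 1 / complex_of_real (sqrt (real (n k))) * zeta n k ^ (b0 * a0)"
  have "Z k i j = (\<Sum>b<n (Suc k). \<Sum>a<n k. if b = b0 then (if a = a0 then c else 0) else 0)"
    unfolding Zop_def ketbra_def ket_def c_def using ab by (intro sum.cong refl) auto
  also have "\<dots> = (\<Sum>b<n (Suc k). if b = b0 then (\<Sum>a<n k. if a = a0 then c else 0) else 0)"
    by (intro sum.cong refl) auto
  finally show ?thesis using True ab by (simp add: c_def)
next
  case False
  then show ?thesis
    unfolding Zop_def ketbra_def ket_def in_E_def by (auto intro!: sum.neutral)
qed

lemma P_mprod:
  assumes "1 \<le> k" "k \<le> N"
  shows "P k \<star> A = (\<lambda>i j. if in_E k i then A i j else 0)"
proof (intro ext)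
  fix i j
  have "(P k \<star> A) i j = (\<Sum>l\<in>basis N n. if l = i then (if in_E k i then A i j else 0) else 0)"
    unfolding mmult_def P_entry by (intro sum.cong) auto
  then show "(P k \<star> A) i j = (if in_E k i then A i j else 0)"
    using in_E_basis[OF assms] by auto
qed

lemma mprod_P:
  assumes "1 \<le> k" "k \<le> N"
  shows "A \<star> P k = (\<lambda>i j. if in_E k j then A i j else 0)"
proof (intro ext)
  fix i j
  have "(A \<star> P k) i j = (\<Sum>l\<in>basis N n. if l = j then (if in_E k j then A i j else 0) else 0)"
    unfolding mmult_def P_entry by (intro sum.cong) auto
  then show "(A \<star> P k) i j = (if in_E k j then A i j else 0)"
    using in_E_basis[OF assms] by auto
qed

lemma P_mprod_P: "1 \<le> j \<Longrightarrow> j \<le> N \<Longrightarrow> P j \<star> P l = (if j = l then P j else 0)"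
  by (auto simp: P_mprod P_entry fun_eq_iff dest: in_E_unique)

lemma P_mprod_Z: "1 \<le> j \<Longrightarrow> j \<le> N \<Longrightarrow> P j \<star> Z k = (if j = Suc k then Z k else 0)"
  by (auto simp: P_mprod Z_entry fun_eq_iff dest: in_E_unique)

lemma Z_mprod_P: "1 \<le> j \<Longrightarrow> j \<le> N \<Longrightarrow> Z k \<star> P j = (if j = k then Z k else 0)"
  by (auto simp: mprod_P Z_entry fun_eq_iff dest: in_E_unique)

lemma P_mprod_adj_Z: "1 \<le> j \<Longrightarrow> j \<le> N \<Longrightarrow> P j \<star> adj (Z k) = (if j = k then adj (Z k) else 0)"
  by (auto simp: P_mprod adj_def Z_entry fun_eq_iff dest: in_E_unique)

lemma adj_Z_mprod_P: "1 \<le> j \<Longrightarrow> j \<le> N \<Longrightarrow> adj (Z k) \<star> P j = (if j = Suc k then adj (Z k) else 0)"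
  by (auto simp: mprod_P adj_def Z_entry fun_eq_iff dest: in_E_unique)

lemma sum_cis_orthogonal:
  fixes m b b' :: nat
  assumes "b < m" "b' < m"
  shows "(\<Sum>a<m. cis (2*pi/m) ^ (b*a) * cnj (cis (2*pi/m) ^ (b'*a)))
       = (if b = b' then of_nat m else 0)"
proof -
  define \<zeta> where "\<zeta> = cis (2*pi/m)"
  define w where "w = \<zeta> ^ b * cnj (\<zeta> ^ b')"
  have m: "m > 0" using assms by simp
  have \<zeta>_pow: "\<zeta> ^ k = cis (2 * pi * real k / real m)" for k
    by (simp add: \<zeta>_def DeMoivre mult_ac)
  have "\<zeta> ^ m = 1"
    using m by (simp add: \<zeta>_pow complex_eq_iff)
  moreover have "w ^ m = (\<zeta> ^ m) ^ b * cnj ((\<zeta> ^ m) ^ b')"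
    unfolding w_def power_mult_distrib complex_cnj_power by (simp flip: power_mult add: mult.commute)
  ultimately have w_pow_m: "w ^ m = 1"
    by simp
  have w_eq_1: "w = 1 \<longleftrightarrow> b = b'"
  proof
    assume "w = 1"
    then have "\<zeta> ^ b = \<zeta> ^ b'"
      by (simp add: w_def \<zeta>_pow cis_cnj cis_mult flip: cis_divide)
    then show "b = b'"
      using inj_onD[OF bij_betw_imp_inj_on[OF bij_betw_roots_unity[OF m]]] assms
      by (simp add: \<zeta>_pow)
  qed (simp add: w_def \<zeta>_pow cis_cnj cis_mult)
  have "(\<Sum>a<m. \<zeta> ^ (b*a) * cnj (\<zeta> ^ (b'*a))) = (\<Sum>a<m. w ^ a)"
    by (simp add: w_def power_mult power_mult_distrib)
  also have "\<dots> = (if b = b' then of_nat m else 0)"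
    using w_eq_1 w_pow_m by (auto simp: geometric_sum)
  finally show ?thesis by (simp add: \<zeta>_def)
qed

text \<open>The rows b < n (Suc k) \<le> n k of Z k are distinct characters of the cyclic group
  of order n k, hence orthogonal.\<close>
lemma Z_mprod_adj_Z:
  assumes "1 \<le> k" "k < N" "n (Suc k) \<le> n k"
  shows "Z k \<star> adj (Z k) = P (Suc k)"
proof (intro ext)
  fix i j
  have "(Z k \<star> adj (Z k)) i j = (\<Sum>a<n k. Z k i (Site k a) * cnj (Z k j (Site k a)))"
    unfolding mmult_def adj_def using assms by (intro sum_basis_E) (auto simp: Z_entry)
  also have "\<dots> = P (Suc k) i j"
  proof (cases "in_E (Suc k) i \<and> in_E (Suc k) j")
    case True
    then obtain b b' where bb: "b < n (Suc k)" "i = Site (Suc k) b" "b' < n (Suc k)" "j = Site (Suc k) b'"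
      unfolding in_E_def by auto
    define c where "c = 1 / complex_of_real (sqrt (real (n k)))"
    have c: "c * cnj c = 1 / of_nat (n k)"
    proof -
      have "complex_of_real (sqrt (real (n k))) * complex_of_real (sqrt (real (n k))) = of_nat (n k)"
        by (simp flip: of_real_mult)
      then show ?thesis unfolding c_def by (simp add: field_simps)
    qed
    have "(\<Sum>a<n k. Z k i (Site k a) * cnj (Z k j (Site k a)))
        = (\<Sum>a<n k. (c * cnj c) * (cis (2*pi/n k) ^ (b*a) * cnj (cis (2*pi/n k) ^ (b'*a))))"
      using bb by (intro sum.cong) (auto simp: Z_entry zeta_def c_def)
    also have "\<dots> = (c * cnj c) * (if b = b' then of_nat (n k) else 0)"
      by (subst sum_distrib_left[symmetric], subst sum_cis_orthogonal) (use bb assms in auto)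
    also have "\<dots> = P (Suc k) i j"
      using bb assms c by (auto simp: P_entry)
    finally show ?thesis .
  next
    case False
    then show ?thesis by (auto simp: Z_entry P_entry)
  qed
  finally show "(Z k \<star> adj (Z k)) i j = P (Suc k) i j" .
qed

lemma P_mprod_Q: "1 \<le> j \<Longrightarrow> j \<le> N \<Longrightarrow> P j \<star> Q k = (if j = k then Q k else 0)"
  by (simp add: mprod_assoc[symmetric] P_mprod_adj_Z)

lemma Q_mprod_P: "1 \<le> j \<Longrightarrow> j \<le> N \<Longrightarrow> Q k \<star> P j = (if j = k then Q k else 0)"
  by (simp add: mprod_assoc Z_mprod_P)

lemma Q_N_eq_0: "Q N = 0"
proof -
  have "\<not> in_E (Suc N) l" if "l \<in> basis N n" for l
    using that by (auto simp: basis_def)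
  then show ?thesis
    by (auto simp: fun_eq_iff mmult_def adj_def Z_entry intro!: sum.neutral)
qed

lemma sum_chain_delta:
  assumes "1 \<le> j" "j \<le> N"
  shows "(\<Sum>k\<in>{1..N-1}. (if k = j then a else 0) + (if k = j - 1 then b else 0))
       = (if 1 \<le> j \<and> j < N then a else 0) + (if 2 \<le> j \<and> j \<le> N then (b :: op) else 0)"
proof -
  have "j \<in> {1..N-1} \<longleftrightarrow> 1 \<le> j \<and> j < N" "j - 1 \<in> {1..N-1} \<longleftrightarrow> 2 \<le> j \<and> j \<le> N"
    using assms by auto
  then show ?thesis
    by (simp add: sum.distrib)
qed
end

locale chain = chain_space +
  assumes N_ge_2: "N \<ge> 2"
    and n_decreasing: "\<And>k. 1 \<le> k \<Longrightarrow> k < N \<Longrightarrow> n (Suc k) \<le> n k"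
begin

lemma Z_mprod_Q: "1 \<le> k \<Longrightarrow> k < N \<Longrightarrow> Z k \<star> Q k = Z k"
  by (simp add: mprod_assoc[symmetric] Z_mprod_adj_Z n_decreasing P_mprod_Z)

lemma Q_mprod_adj_Z: "1 \<le> k \<Longrightarrow> k < N \<Longrightarrow> Q k \<star> adj (Z k) = adj (Z k)"
  by (simp add: mprod_assoc Z_mprod_adj_Z n_decreasing adj_Z_mprod_P)

lemma Q_idem: "1 \<le> k \<Longrightarrow> k \<le> N \<Longrightarrow> Q k \<star> Q k = Q k"
  using Q_N_eq_0 by (cases "k = N") (simp_all add: mprod_assoc[symmetric] Q_mprod_adj_Z)


end

section \<open>Reduction of the generator\<close>

lemma smult_sum_diff_add_sum:
  "smult c (sum a S - sum b S) + sum d S = (\<Sum>k\<in>S. smult c (a k - b k) + d k)"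
  by (simp add: fun_eq_iff smult_def sum_fun_apply sum.distrib right_diff_distrib
      sum_subtractf sum_distrib_left)

locale invariant_state = chain +
  fixes Gm Gp gm gp :: "freq \<Rightarrow> real" and \<rho> :: op
  assumes Gm_pos: "\<And>w. w \<in> freqs N \<Longrightarrow> Gm w > 0"
    and Gp_pos: "\<And>w. w \<in> freqs N \<Longrightarrow> Gp w > 0"
    and state: "is_state N n \<rho>"
    and invariant: "lindblad N n Gm Gp gm gp \<rho> = 0"
    and supported: "supported_Omega N n \<rho>"
begin

lemma W_in_freqs: "k \<in> {1..N-1} \<Longrightarrow> W k \<in> freqs N"
  unfolding freqs_def by auto

lemma Omega_members:
  "ket Plus \<in> Omega" "ket Minus \<in> Omega" "phi n (Suc 0) 0 \<in> Omega" "phi n N 0 \<in> Omega"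
  unfolding Omega_def by auto

definition H_term :: "nat \<Rightarrow> op" where
  "H_term k = smult (gm (W k)) (Q k) - smult (gp (W k)) (P (Suc k))"

lemma Heff_mprod: "Heff N n gm gp \<star> \<rho> = (\<Sum>k\<in>{1..N-1}. H_term k) \<star> \<rho>"
  unfolding Heff_def H_term_def
  by (simp add: mprod_distribs ketbra_mprod_eq_0[OF state supported] Omega_members)

lemma mprod_Heff: "\<rho> \<star> Heff N n gm gp = \<rho> \<star> (\<Sum>k\<in>{1..N-1}. H_term k)"
  unfolding Heff_def H_term_def
  by (simp add: mprod_distribs mprod_ketbra_eq_0[OF state supported] Omega_members)

lemma sum_dissip_freqs:
  "(\<Sum>w\<in>freqs N. dissip N n (Lm n N Gm w) \<rho> + dissip N n (Lp n N Gp w) \<rho>)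
   = (\<Sum>k\<in>{1..N-1}. dissip N n (Lm n N Gm (W k)) \<rho> + dissip N n (Lp n N Gp (W k)) \<rho>)"
proof -
  define f where "f w = dissip N n (Lm n N Gm w) \<rho> + dissip N n (Lp n N Gp w) \<rho>" for w
  have "f Wplus = 0" "f Wminus = 0"
    unfolding f_def Lm_def Lp_def
    by (simp_all add: dissip_ketbra_eq_0[OF state supported] dissip_zero Omega_members)
  moreover have "freqs N = insert Wplus (insert Wminus (W ` {1..N-1}))"
    unfolding freqs_def by auto
  ultimately have "sum f (freqs N) = sum f (W ` {1..N-1})"
    by (simp add: image_iff)
  also have "\<dots> = (\<Sum>k\<in>{1..N-1}. f (W k))"
    by (simp add: sum.reindex inj_on_def)
  finally show ?thesis
    unfolding f_def .
qed

text \<open>cQ k and cP k are the coefficients of Q k and P (Suc k) in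
  \<i> Heff + (1/2) \<Sum>_w L_w^* L_w, restricted to the chain.\<close>
definition cQ :: "nat \<Rightarrow> complex" where
  "cQ k = of_real (Gm (W k) / 2) + \<i> * of_real (gm (W k))"

definition cP :: "nat \<Rightarrow> complex" where
  "cP k = of_real (Gp (W k) / 2) - \<i> * of_real (gp (W k))"

definition G_term :: "nat \<Rightarrow> op" where
  "G_term k = smult (cQ k) (Q k) + smult (cP k) (P (Suc k))"

definition G'_term :: "nat \<Rightarrow> op" where
  "G'_term k = smult (cnj (cQ k)) (Q k) + smult (cnj (cP k)) (P (Suc k))"

definition J_term :: "nat \<Rightarrow> op" where
  "J_term k = smult (of_real (Gm (W k))) (Z k \<star> \<rho> \<star> adj (Z k))
    + smult (of_real (Gp (W k))) (adj (Z k) \<star> \<rho> \<star> Z k)"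

definition G :: op where "G = (\<Sum>k\<in>{1..N-1}. G_term k)"
definition G' :: op where "G' = (\<Sum>k\<in>{1..N-1}. G'_term k)"
definition J :: op where "J = (\<Sum>k\<in>{1..N-1}. J_term k)"

lemma chain_term_eq:
  assumes k: "k \<in> {1..N-1}"
  shows "smult (- \<i>) (H_term k \<star> \<rho> - \<rho> \<star> H_term k)
      + (dissip N n (Lm n N Gm (W k)) \<rho> + dissip N n (Lp n N Gp (W k)) \<rho>)
    = J_term k - (G_term k \<star> \<rho> + \<rho> \<star> G'_term k)"
proof -
  have "1 \<le> k" "k < N"
    using k by auto
  then have ZZ: "Z k \<star> adj (Z k) = P (Suc k)"
    by (simp add: Z_mprod_adj_Z n_decreasing)
  have Lm: "dissip N n (Lm n N Gm (W k)) \<rho> = smult (of_real (Gm (W k))) (dissip N n (Z k) \<rho>)"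
    unfolding Lm_def using Gm_pos[OF W_in_freqs[OF k]]
    by (simp add: dissip_smult flip: of_real_mult)
  have Lp: "dissip N n (Lp n N Gp (W k)) \<rho> = smult (of_real (Gp (W k))) (dissip N n (adj (Z k)) \<rho>)"
    unfolding Lp_def using Gp_pos[OF W_in_freqs[OF k]]
    by (simp add: dissip_smult flip: of_real_mult)
  show ?thesis
    unfolding Lm Lp unfolding dissip_def adj_adj ZZ H_term_def G_term_def G'_term_def J_term_def
    by (simp only: mprod_distribs) (simp add: fun_eq_iff smult_def algebra_simps cQ_def cP_def)
qed

lemma lindblad_eq: "lindblad N n Gm Gp gm gp \<rho> = J - (G \<star> \<rho> + \<rho> \<star> G')"
proof -
  have "lindblad N n Gm Gp gm gp \<rho>
      = (\<Sum>k\<in>{1..N-1}. smult (- \<i>) (H_term k \<star> \<rho> - \<rho> \<star> H_term k)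
          + (dissip N n (Lm n N Gm (W k)) \<rho> + dissip N n (Lp n N Gp (W k)) \<rho>))"
    unfolding lindblad_def Heff_mprod mprod_Heff sum_dissip_freqs mprod_sum_left mprod_sum_right
    by (rule smult_sum_diff_add_sum)
  also have "\<dots> = (\<Sum>k\<in>{1..N-1}. J_term k - (G_term k \<star> \<rho> + \<rho> \<star> G'_term k))"
    by (rule sum.cong) (simp_all add: chain_term_eq)
  also have "\<dots> = J - (G \<star> \<rho> + \<rho> \<star> G')"
    unfolding J_def G_def G'_def mprod_sum_left mprod_sum_right
    by (simp add: sum_subtractf sum.distrib)
  finally show ?thesis .
qed

section \<open>Block decomposition of the invariant state\<close>

definition cQ_blk :: "nat \<Rightarrow> complex" where
  "cQ_blk j = (if 1 \<le> j \<and> j < N then cQ j else 0)"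

definition cP_blk :: "nat \<Rightarrow> complex" where
  "cP_blk j = (if 2 \<le> j \<and> j \<le> N then cP (j - 1) else 0)"

definition G_blk :: "nat \<Rightarrow> op" where
  "G_blk j = smult (cQ_blk j) (Q j) + smult (cP_blk j) (P j)"

definition G'_blk :: "nat \<Rightarrow> op" where
  "G'_blk j = smult (cnj (cQ_blk j)) (Q j) + smult (cnj (cP_blk j)) (P j)"

definition blk :: "nat \<Rightarrow> nat \<Rightarrow> op" where
  "blk j l = P j \<star> \<rho> \<star> P l"

definition J_up :: "nat \<Rightarrow> op" where
  "J_up j = (if 2 \<le> j \<and> j \<le> N
     then smult (of_real (Gm (W (j - 1)))) (Z (j - 1) \<star> \<rho> \<star> adj (Z (j - 1))) else 0)"

definition J_down :: "nat \<Rightarrow> op" where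
  "J_down j = (if 1 \<le> j \<and> j < N
     then smult (of_real (Gp (W j))) (adj (Z j) \<star> \<rho> \<star> Z j) else 0)"

lemma P_mprod_G:
  assumes j: "1 \<le> j" "j \<le> N"
  shows "P j \<star> G = G_blk j"
proof -
  have "P j \<star> G = (\<Sum>k\<in>{1..N-1}. (if k = j then smult (cQ j) (Q j) else 0)
      + (if k = j - 1 then smult (cP (j - 1)) (P j) else 0))"
    unfolding G_def G_term_def mprod_sum_right
    by (intro sum.cong refl) (use j in \<open>auto simp: mprod_distribs P_mprod_Q P_mprod_P\<close>)
  then show ?thesis
    unfolding sum_chain_delta[OF j] G_blk_def cQ_blk_def cP_blk_def by simp
qed

lemma G'_mprod_P:
  assumes j: "1 \<le> j" "j \<le> N"
  shows "G' \<star> P j = G'_blk j"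
proof -
  have "G' \<star> P j = (\<Sum>k\<in>{1..N-1}. (if k = j then smult (cnj (cQ j)) (Q j) else 0)
      + (if k = j - 1 then smult (cnj (cP (j - 1))) (P j) else 0))"
    unfolding G'_def G'_term_def mprod_sum_left
    by (intro sum.cong refl) (use j in \<open>auto simp: mprod_distribs Q_mprod_P P_mprod_P\<close>)
  then show ?thesis
    unfolding sum_chain_delta[OF j] G'_blk_def cQ_blk_def cP_blk_def by simp
qed

lemma G_blk_mprod_P: "1 \<le> j \<Longrightarrow> j \<le> N \<Longrightarrow> G_blk j \<star> P j = G_blk j"
  unfolding G_blk_def by (simp add: mprod_distribs Q_mprod_P P_mprod_P)

lemma P_mprod_G'_blk: "1 \<le> j \<Longrightarrow> j \<le> N \<Longrightarrow> P j \<star> G'_blk j = G'_blk j"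
  unfolding G'_blk_def by (simp add: mprod_distribs P_mprod_Q P_mprod_P)

lemma P_mprod_J_mprod_P:
  assumes j: "1 \<le> j" "j \<le> N" and l: "1 \<le> l" "l \<le> N"
  shows "P j \<star> J \<star> P l = (if j = l then J_up j + J_down j else 0)"
proof -
  have "P j \<star> J \<star> P l = (\<Sum>k\<in>{1..N-1}.
      (if k = j then (if j = l then smult (of_real (Gp (W j))) (adj (Z j) \<star> \<rho> \<star> Z j) else 0) else 0)
    + (if k = j - 1 then (if j = l
        then smult (of_real (Gm (W (j - 1)))) (Z (j - 1) \<star> \<rho> \<star> adj (Z (j - 1))) else 0) else 0))"
    unfolding J_def J_term_def mprod_sum_right mprod_sum_left
  proof (intro sum.cong refl)
    fix k
    assume "k \<in> {1..N-1}"
    moreover have "A \<star> (B \<star> \<rho> \<star> C) \<star> D = A \<star> B \<star> \<rho> \<star> (C \<star> D)" for A B C D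
      by (simp add: mprod_assoc)
    ultimately show "P j \<star> (smult (of_real (Gm (W k))) (Z k \<star> \<rho> \<star> adj (Z k))
          + smult (of_real (Gp (W k))) (adj (Z k) \<star> \<rho> \<star> Z k)) \<star> P l
      = (if k = j then (if j = l then smult (of_real (Gp (W j))) (adj (Z j) \<star> \<rho> \<star> Z j) else 0) else 0)
      + (if k = j - 1 then (if j = l
          then smult (of_real (Gm (W (j - 1)))) (Z (j - 1) \<star> \<rho> \<star> adj (Z (j - 1))) else 0) else 0)"
      using j l
      by (auto simp: mprod_distribs P_mprod_Z adj_Z_mprod_P P_mprod_adj_Z Z_mprod_P)
  qed
  then show ?thesis
    unfolding sum_chain_delta[OF j] using j l by (auto simp: J_up_def J_down_def)
qed

lemma block_equation:
  assumes j: "1 \<le> j" "j \<le> N" and l: "1 \<le> l" "l \<le> N"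
  shows "G_blk j \<star> blk j l + blk j l \<star> G'_blk l = (if j = l then J_up j + J_down j else 0)"
proof -
  have "P j \<star> (G \<star> \<rho>) \<star> P l = G_blk j \<star> P j \<star> \<rho> \<star> P l"
    by (simp add: P_mprod_G[OF j] G_blk_mprod_P[OF j] flip: mprod_assoc)
  also have "\<dots> = G_blk j \<star> blk j l"
    by (simp add: blk_def mprod_assoc)
  finally have left: "P j \<star> (G \<star> \<rho>) \<star> P l = G_blk j \<star> blk j l" .
  have "P j \<star> (\<rho> \<star> G') \<star> P l = P j \<star> \<rho> \<star> (P l \<star> G'_blk l)"
    by (simp add: mprod_assoc G'_mprod_P[OF l] P_mprod_G'_blk[OF l])
  also have "\<dots> = blk j l \<star> G'_blk l"
    by (simp add: blk_def mprod_assoc)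
  finally have right: "P j \<star> (\<rho> \<star> G') \<star> P l = blk j l \<star> G'_blk l" .
  have "P j \<star> lindblad N n Gm Gp gm gp \<rho> \<star> P l = 0"
    by (simp add: invariant)
  then show ?thesis
    unfolding lindblad_eq mprod_distribs P_mprod_J_mprod_P[OF j l] left right
    by simp
qed

lemma blk_entry:
  "1 \<le> j \<Longrightarrow> j \<le> N \<Longrightarrow> 1 \<le> l \<Longrightarrow> l \<le> N \<Longrightarrow>
    blk j l i i' = (if in_E j i \<and> in_E l i' then \<rho> i i' else 0)"
  unfolding blk_def by (simp add: P_mprod mprod_P)

lemma P_mprod_blk: "1 \<le> j \<Longrightarrow> j \<le> N \<Longrightarrow> P j \<star> blk j l = blk j l"
  unfolding blk_def by (simp add: P_mprod_P flip: mprod_assoc)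

lemma blk_mprod_P: "1 \<le> l \<Longrightarrow> l \<le> N \<Longrightarrow> blk j l \<star> P l = blk j l"
  unfolding blk_def by (simp add: mprod_assoc P_mprod_P)

lemma Q_mprod_G_blk:
  "1 \<le> j \<Longrightarrow> j \<le> N \<Longrightarrow> Q j \<star> G_blk j = smult (cQ_blk j + cP_blk j) (Q j)"
  unfolding G_blk_def by (simp add: mprod_distribs Q_idem Q_mprod_P smult_add_left)

lemma P_diff_Q_mprod_G_blk:
  "1 \<le> j \<Longrightarrow> j \<le> N \<Longrightarrow> (P j - Q j) \<star> G_blk j = smult (cP_blk j) (P j - Q j)"
  unfolding G_blk_def
  by (simp add: mprod_distribs Q_idem Q_mprod_P P_mprod_Q P_mprod_P smult_diff)

lemma G'_blk_mprod_Q: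
  "1 \<le> j \<Longrightarrow> j \<le> N \<Longrightarrow> G'_blk j \<star> Q j = smult (cnj (cQ_blk j) + cnj (cP_blk j)) (Q j)"
  unfolding G'_blk_def by (simp add: mprod_distribs Q_idem P_mprod_Q smult_add_left)

lemma G'_blk_mprod_P_diff_Q:
  "1 \<le> j \<Longrightarrow> j \<le> N \<Longrightarrow> G'_blk j \<star> (P j - Q j) = smult (cnj (cP_blk j)) (P j - Q j)"
  unfolding G'_blk_def
  by (simp add: mprod_distribs Q_idem Q_mprod_P P_mprod_Q P_mprod_P smult_diff)

lemma Re_cQ_pos: "1 \<le> k \<Longrightarrow> k < N \<Longrightarrow> Re (cQ k) > 0"
  unfolding cQ_def using Gm_pos[OF W_in_freqs, of k] by auto

lemma Re_cP_pos: "1 \<le> k \<Longrightarrow> k < N \<Longrightarrow> Re (cP k) > 0"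
  unfolding cP_def using Gp_pos[OF W_in_freqs, of k] by auto

lemma Re_cP_blk_nonneg: "Re (cP_blk j) \<ge> 0"
  unfolding cP_blk_def using Re_cP_pos by (auto simp: less_imp_le)

lemma Re_cP_blk_pos: "2 \<le> j \<Longrightarrow> j \<le> N \<Longrightarrow> Re (cP_blk j) > 0"
  unfolding cP_blk_def using Re_cP_pos by auto

text \<open>cP_blk vanishes on the first block and cQ_blk on the last; N \<ge> 2 keeps them from
  vanishing on the same block.\<close>
lemma Re_cQ_blk_add_cP_blk_pos: "1 \<le> j \<Longrightarrow> j \<le> N \<Longrightarrow> Re (cQ_blk j + cP_blk j) > 0"
  using Re_cP_blk_nonneg[of j] Re_cP_blk_pos[of j] Re_cQ_pos[of j] N_ge_2
  by (cases "j < N") (auto simp: cQ_blk_def)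

lemma blk_off_diagonal:
  assumes j: "1 \<le> j" "j \<le> N" and l: "1 \<le> l" "l \<le> N" and "j \<noteq> l"
  shows "blk j l = 0"
proof -
  have eq: "G_blk j \<star> blk j l + blk j l \<star> G'_blk l = 0"
    using block_equation[OF j l] \<open>j \<noteq> l\<close> by simp
  have "Re (cP_blk j) + Re (cP_blk l) > 0"
    using Re_cP_blk_nonneg[of j] Re_cP_blk_nonneg[of l] Re_cP_blk_pos[of j] Re_cP_blk_pos[of l]
      \<open>j \<noteq> l\<close> j l
    by (cases "j = 1"; cases "l = 1") auto
  then have PP: "(P j - Q j) \<star> blk j l \<star> (P l - Q l) = 0"
    by (intro sylvester_eq_0[OF eq P_diff_Q_mprod_G_blk[OF j] G'_blk_mprod_P_diff_Q[OF l]])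
      (auto simp: complex_eq_iff)
  have QQ: "Q j \<star> blk j l \<star> Q l = 0"
    by (intro sylvester_eq_0[OF eq Q_mprod_G_blk[OF j] G'_blk_mprod_Q[OF l]])
      (use Re_cQ_blk_add_cP_blk_pos[OF j] Re_cQ_blk_add_cP_blk_pos[OF l] in \<open>auto simp: complex_eq_iff\<close>)
  have QP: "Q j \<star> blk j l \<star> (P l - Q l) = 0"
    by (intro sylvester_eq_0[OF eq Q_mprod_G_blk[OF j] G'_blk_mprod_P_diff_Q[OF l]])
      (use Re_cQ_blk_add_cP_blk_pos[OF j] Re_cP_blk_nonneg[of l] in \<open>auto simp: complex_eq_iff\<close>)
  have PQ: "(P j - Q j) \<star> blk j l \<star> Q l = 0"
    by (intro sylvester_eq_0[OF eq P_diff_Q_mprod_G_blk[OF j] G'_blk_mprod_Q[OF l]])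
      (use Re_cQ_blk_add_cP_blk_pos[OF l] Re_cP_blk_nonneg[of j] in \<open>auto simp: complex_eq_iff\<close>)
  have "blk j l = P j \<star> blk j l \<star> P l"
    using P_mprod_blk[OF j] blk_mprod_P[OF l] by simp
  also have "\<dots> = ((P j - Q j) + Q j) \<star> blk j l \<star> ((P l - Q l) + Q l)"
    by simp
  also have "\<dots> = 0"
    unfolding mprod_add_left mprod_add_right PP QQ QP PQ by simp
  finally show ?thesis .
qed

lemma rho_Minus_Plus: "\<rho> Minus i = 0" "\<rho> Plus i = 0" "\<rho> i Minus = 0" "\<rho> i Plus = 0"
proof -
  have op: "is_op N n \<rho>"
    using state unfolding is_state_def by simp
  have basis: "Minus \<in> basis N n" "Plus \<in> basis N n"
    unfolding basis_def by auto
  show "\<rho> Minus i = 0" "\<rho> Plus i = 0"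
    using supported_Omega_row[OF op supported, of "ket Minus" i]
      supported_Omega_row[OF op supported, of "ket Plus" i]
    by (simp_all add: Omega_members basis sum_basis_ket_left)
  show "\<rho> i Minus = 0" "\<rho> i Plus = 0"
    using supported_Omega_column[OF state supported, of "ket Minus" i]
      supported_Omega_column[OF state supported, of "ket Plus" i]
    by (simp_all add: Omega_members basis sum_basis_ket_right)
qed

lemma rho_off_block:
  assumes l: "1 \<le> l" "l \<le> N" and "in_E l i" "\<not> in_E l i'"
  shows "\<rho> i i' = 0 \<and> \<rho> i' i = 0"
proof (cases "i' \<in> basis N n")
  case False
  then show ?thesis
    using state in_E_basis[OF l \<open>in_E l i\<close>] unfolding is_state_def is_op_def by auto
next
  case True
  then consider "i' = Minus" | "i' = Plus" | j a where "i' = Site j a" "1 \<le> j" "j \<le> N" "a < n j"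
    unfolding basis_def by auto
  then show ?thesis
  proof cases
    case (3 j a)
    then have "j \<noteq> l" "in_E j i'"
      using assms by auto
    then have "blk l j i i' = 0" "blk j l i' i = 0"
      using blk_off_diagonal 3 l by auto
    then show ?thesis
      using blk_entry[OF l 3(2,3)] blk_entry[OF 3(2,3) l] \<open>in_E l i\<close> \<open>in_E j i'\<close> by auto
  qed (simp_all add: rho_Minus_Plus)
qed

lemma mprod_P_eq_blk: "1 \<le> l \<Longrightarrow> l \<le> N \<Longrightarrow> \<rho> \<star> P l = blk l l"
  unfolding blk_def P_mprod mprod_P using rho_off_block by (auto simp: fun_eq_iff)

lemma P_mprod_eq_blk: "1 \<le> l \<Longrightarrow> l \<le> N \<Longrightarrow> P l \<star> \<rho> = blk l l"
  unfolding blk_def P_mprod mprod_P using rho_off_block by (auto simp: fun_eq_iff)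

lemma Z_rho_adj_Z:
  assumes "1 \<le> k" "k \<le> N"
  shows "Z k \<star> \<rho> \<star> adj (Z k) = Z k \<star> blk k k \<star> adj (Z k)"
proof -
  have "Z k \<star> blk k k \<star> adj (Z k) = Z k \<star> P k \<star> \<rho> \<star> (P k \<star> adj (Z k))"
    unfolding blk_def by (simp add: mprod_assoc)
  then show ?thesis
    using assms by (simp add: Z_mprod_P P_mprod_adj_Z)
qed

lemma adj_Z_rho_Z:
  assumes "1 \<le> k" "Suc k \<le> N"
  shows "adj (Z k) \<star> \<rho> \<star> Z k = adj (Z k) \<star> blk (Suc k) (Suc k) \<star> Z k"
proof -
  have "adj (Z k) \<star> blk (Suc k) (Suc k) \<star> Z k
      = adj (Z k) \<star> P (Suc k) \<star> \<rho> \<star> (P (Suc k) \<star> Z k)"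
    unfolding blk_def by (simp add: mprod_assoc)
  then show ?thesis
    using assms by (simp add: adj_Z_mprod_P P_mprod_Z)
qed

section \<open>Detailed balance\<close>

lemma cQ_add_cnj: "cQ k + cnj (cQ k) = of_real (Gm (W k))"
  unfolding cQ_def by (simp add: complex_eq_iff)

lemma cP_add_cnj: "cP k + cnj (cP k) = of_real (Gp (W k))"
  unfolding cP_def by (simp add: complex_eq_iff)

lemma diagonal_block_balance:
  assumes k: "1 \<le> k" "k < N"
    and up: "J_up k = smult (cP_blk k + cnj (cP_blk k)) (blk k k)"
  shows "smult (of_real (Gp (W k))) (adj (Z k) \<star> blk (Suc k) (Suc k) \<star> Z k)
    = smult (cQ k) (Q k \<star> blk k k) + smult (cnj (cQ k)) (blk k k \<star> Q k)"
proof -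
  have "G_blk k \<star> blk k k = smult (cQ k) (Q k \<star> blk k k) + smult (cP_blk k) (blk k k)"
    unfolding G_blk_def using k by (simp add: mprod_distribs P_mprod_blk cQ_blk_def)
  moreover have "blk k k \<star> G'_blk k
      = smult (cnj (cQ k)) (blk k k \<star> Q k) + smult (cnj (cP_blk k)) (blk k k)"
    unfolding G'_blk_def using k by (simp add: mprod_distribs blk_mprod_P cQ_blk_def)
  moreover have "J_down k = smult (of_real (Gp (W k))) (adj (Z k) \<star> blk (Suc k) (Suc k) \<star> Z k)"
    unfolding J_down_def using k adj_Z_rho_Z[of k] by simp
  ultimately have "smult (cP_blk k + cnj (cP_blk k)) (blk k k)
      + smult (of_real (Gp (W k))) (adj (Z k) \<star> blk (Suc k) (Suc k) \<star> Z k)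
    = smult (cQ k) (Q k \<star> blk k k) + smult (cnj (cQ k)) (blk k k \<star> Q k)
      + smult (cP_blk k + cnj (cP_blk k)) (blk k k)"
    using block_equation[of k k] k up by (simp add: fun_eq_iff smult_def algebra_simps)
  then show ?thesis
    by (simp add: fun_eq_iff)
qed

lemma detailed_balance_step:
  assumes k: "1 \<le> k" "k < N"
    and up: "J_up k = smult (cP_blk k + cnj (cP_blk k)) (blk k k)"
  shows "smult (of_real (Gp (W k))) (blk (Suc k) (Suc k))
    = smult (of_real (Gm (W k))) (Z k \<star> blk k k \<star> adj (Z k))"
proof -
  have ZZ: "Z k \<star> adj (Z k) = P (Suc k)"
    using k by (simp add: Z_mprod_adj_Z n_decreasing)
  have "smult (of_real (Gp (W k))) (blk (Suc k) (Suc k))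
      = smult (of_real (Gp (W k))) (Z k \<star> adj (Z k) \<star> blk (Suc k) (Suc k) \<star> (Z k \<star> adj (Z k)))"
    using k by (simp add: ZZ P_mprod_blk blk_mprod_P)
  also have "\<dots> = Z k \<star> smult (of_real (Gp (W k))) (adj (Z k) \<star> blk (Suc k) (Suc k) \<star> Z k) \<star> adj (Z k)"
    by (simp add: mprod_smult_left mprod_smult_right mprod_assoc)
  also have "\<dots> = smult (cQ k) (Z k \<star> Q k \<star> blk k k \<star> adj (Z k))
      + smult (cnj (cQ k)) (Z k \<star> blk k k \<star> (Q k \<star> adj (Z k)))"
    unfolding diagonal_block_balance[OF k up] by (simp add: mprod_distribs mprod_assoc)
  also have "\<dots> = smult (of_real (Gm (W k))) (Z k \<star> blk k k \<star> adj (Z k))"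
    using k by (simp add: Z_mprod_Q Q_mprod_adj_Z cQ_add_cnj flip: smult_add_left)
  finally show ?thesis .
qed

text \<open>Phrased through cP_blk so that the first block, where both sides vanish, is covered;
  for k \<ge> 2 the right-hand side is \<Gamma>_{+,k-1} \<rho>_{kk}.\<close>
lemma J_up_eq: "1 \<le> k \<Longrightarrow> k < N \<Longrightarrow> J_up k = smult (cP_blk k + cnj (cP_blk k)) (blk k k)"
proof (induction k)
  case 0
  then show ?case by simp
next
  case (Suc m)
  show ?case
  proof (cases "m = 0")
    case True
    then show ?thesis by (simp add: J_up_def cP_blk_def)
  next
    case False
    then have m: "1 \<le> m" "m < N"
      using Suc.prems by auto
    have "J_up (Suc m) = smult (of_real (Gm (W m))) (Z m \<star> blk m m \<star> adj (Z m))"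
      unfolding J_up_def using m Suc.prems by (simp add: Z_rho_adj_Z)
    also have "\<dots> = smult (of_real (Gp (W m))) (blk (Suc m) (Suc m))"
      using detailed_balance_step[OF m Suc.IH[OF m]] by simp
    also have "of_real (Gp (W m)) = cP_blk (Suc m) + cnj (cP_blk (Suc m))"
      unfolding cP_blk_def using m Suc.prems by (simp add: cP_add_cnj)
    finally show ?thesis .
  qed
qed

lemma detailed_balance:
  "1 \<le> k \<Longrightarrow> k < N \<Longrightarrow> smult (of_real (Gp (W k))) (blk (Suc k) (Suc k))
    = smult (of_real (Gm (W k))) (Z k \<star> blk k k \<star> adj (Z k))"
  using detailed_balance_step J_up_eq by blast

lemma Z_blk_mprod_Q:
  assumes k: "1 \<le> k" "k < N"
  shows "Z k \<star> blk k k \<star> Q k = Z k \<star> blk k k"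
proof -
  have Z_P_diff_Q: "Z k \<star> (P k - Q k) = 0"
    using k by (simp add: mprod_diff_right Z_mprod_P Z_mprod_Q)
  have Q_P_diff_Q: "Q k \<star> (P k - Q k) = 0"
    using k by (simp add: mprod_diff_right Q_mprod_P Q_idem)
  have "Z k \<star> smult (of_real (Gp (W k))) (adj (Z k) \<star> blk (Suc k) (Suc k) \<star> Z k) \<star> (P k - Q k) = 0"
    by (simp add: mprod_smult_left mprod_smult_right mprod_assoc Z_P_diff_Q)
  moreover have "Z k \<star> (smult (cQ k) (Q k \<star> blk k k) + smult (cnj (cQ k)) (blk k k \<star> Q k)) \<star> (P k - Q k)
      = smult (cQ k) (Z k \<star> Q k \<star> blk k k \<star> (P k - Q k))
        + smult (cnj (cQ k)) (Z k \<star> blk k k \<star> (Q k \<star> (P k - Q k)))"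
    by (simp add: mprod_add_left mprod_add_right mprod_smult_left mprod_smult_right mprod_assoc)
  ultimately have "smult (cQ k) (Z k \<star> blk k k \<star> (P k - Q k)) = 0"
    unfolding diagonal_block_balance[OF k J_up_eq[OF k]] Q_P_diff_Q Z_mprod_Q[OF k] by simp
  moreover have "cQ k \<noteq> 0"
    using Re_cQ_pos[OF k] by auto
  ultimately have "Z k \<star> blk k k \<star> (P k - Q k) = 0"
    by (simp add: smult_eq_zero_iff)
  then have "Z k \<star> blk k k \<star> Q k = Z k \<star> blk k k \<star> P k"
    unfolding mprod_diff_right by simp
  also have "\<dots> = Z k \<star> blk k k"
    using k by (simp add: mprod_assoc blk_mprod_P)
  finally show ?thesis .
qed

lemma rho_mprod_Z:
  assumes k: "k \<in> {1..N-1}"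
  shows "\<rho> \<star> Z k = smult (complex_of_real (exp (beta Gm Gp k))) (Z k \<star> \<rho>)"
proof -
  have k': "1 \<le> k" "k < N"
    using k by auto
  have Gm: "Gm (W k) > 0" and Gp: "Gp (W k) > 0"
    using Gm_pos[OF W_in_freqs[OF k]] Gp_pos[OF W_in_freqs[OF k]] .
  have "\<rho> \<star> Z k = \<rho> \<star> (P (Suc k) \<star> Z k)"
    using k' by (simp add: P_mprod_Z)
  then have rho_Z: "\<rho> \<star> Z k = blk (Suc k) (Suc k) \<star> Z k"
    using k' by (simp add: mprod_P_eq_blk flip: mprod_assoc)
  have "Z k \<star> \<rho> = Z k \<star> P k \<star> \<rho>"
    using k' by (simp add: Z_mprod_P)
  then have Z_rho: "Z k \<star> \<rho> = Z k \<star> blk k k"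
    using k' by (simp add: P_mprod_eq_blk mprod_assoc)
  have "smult (of_real (Gp (W k))) (\<rho> \<star> Z k)
      = smult (of_real (Gp (W k))) (blk (Suc k) (Suc k)) \<star> Z k"
    by (simp add: rho_Z mprod_smult_left)
  also have "\<dots> = smult (of_real (Gm (W k))) (Z k \<star> blk k k \<star> Q k)"
    by (simp add: detailed_balance[OF k'] mprod_smult_left mprod_assoc)
  also have "\<dots> = smult (of_real (Gm (W k))) (Z k \<star> \<rho>)"
    by (simp add: Z_blk_mprod_Q[OF k'] Z_rho)
  finally have balance:
    "smult (of_real (Gp (W k))) (\<rho> \<star> Z k) = smult (of_real (Gm (W k))) (Z k \<star> \<rho>)" .
  have exp_beta: "exp (beta Gm Gp k) = Gm (W k) / Gp (W k)"
    unfolding beta_def using Gm Gp by simp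
  show ?thesis
  proof (intro ext)
    fix i j
    have "of_real (Gp (W k)) * (\<rho> \<star> Z k) i j = of_real (Gm (W k)) * (Z k \<star> \<rho>) i j"
      using balance unfolding smult_def by meson
    then show "(\<rho> \<star> Z k) i j = smult (complex_of_real (exp (beta Gm Gp k))) (Z k \<star> \<rho>) i j"
      unfolding smult_def exp_beta using Gp by (simp add: field_simps)
  qed
qed

end

theorem corollary3p9:
  fixes N :: nat and n :: "nat \<Rightarrow> nat"
    and Gm Gp gm gp :: "freq \<Rightarrow> real" and \<rho> :: op
  assumes "N \<ge> 2"
    and "\<And>k. 1 \<le> k \<Longrightarrow> k \<le> N \<Longrightarrow> n k \<ge> 1"
    and "\<And>k. 1 \<le> k \<Longrightarrow> k < N \<Longrightarrow> n (Suc k) \<le> n k"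
    and "\<And>w. w \<in> freqs N \<Longrightarrow> Gm w > 0"
    and "\<And>w. w \<in> freqs N \<Longrightarrow> Gp w > 0"
    and "is_state N n \<rho>"
    and "lindblad N n Gm Gp gm gp \<rho> = (\<lambda>i j. 0)"
    and "supported_Omega N n \<rho>"
  shows "\<forall>k\<in>{1..N-1}. mmult N n \<rho> (Zop n k)
           = smult (complex_of_real (exp (beta Gm Gp k))) (mmult N n (Zop n k) \<rho>)"
proof -
  interpret invariant_state N n Gm Gp gm gp \<rho>
    using assms by unfold_locales (simp_all add: op_zero_eq)
  show ?thesis
    using rho_mprod_Z by blast
qed

end
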